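(* Let $\mathbb{A}$, its multiplication, the decomposition $A_3=C\oplus L$ and the complex $\mathbb{B}=\mathbb{B}(\mathbb{A},C)$ be as in the context, and suppose moreover that $\mathbb{A}$ is split exact (i.e. exact including at $A_0$, so $I=R$). Then $\mathbb{B}$ is split exact.
   Context: Let $R$ be a commutative Noetherian ring and let $p\ge 1$, $q\ge 3$ be integers. Let $\mathbb{A}\colon 0\to A_3\xrightarrow{d_3}A_2\xrightarrow{d_2}A_1\xrightarrow{d_1}A_0=R$ be a complex of finitely generated free $R$-modules with $\operatorname{rank}A_1=p+2$, $\operatorname{rank}A_2=p+q$, $\operatorname{rank}A_3=q-1$. Fix a differential graded algebra structure on $\mathbb{A}$: $R$-bilinear products $A_1\times A_1\to A_2$ (alternating: $e\cdot e=0$, $e\cdot e'=-e'\cdot e$) and $A_1\times A_2\to A_3$ satisfying the Leibniz rules $d_2(e\cdot e')=d_1(e)e'-d_1(e')e$ and $d_3(e\cdot f)=d_1(e)f+d_2(f)\cdot e$ for $e,e'\in A_1$, $f\in A_2$. Fix a decomposition $A_3=C\oplus L$ with $C$ free of rank $q-2$ and $L$ free of rank $1$; let $\eta\colon A_3\to L$ be the projection and $\iota\colon C\to A_3$ the inclusion. Define the sequence $\mathbb{B}=\mathbb{B}(\mathbb{A},C)\colon 0\to C\xrightarrow{\delta_4}A_2\xrightarrow{\delta_3}\operatorname{Hom}(A_1,L)\oplus A_1\xrightarrow{\delta_2}\operatorname{Hom}(A_2,L)\xrightarrow{\delta_1}\operatorname{Hom}(C,L)$ by $\delta_4=d_3\circ\iota$;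 $\delta_3(f)=\big(e\mapsto \eta(e\cdot f),\ d_2(f)\big)$; $\delta_2(\varphi,e)=\big(f\mapsto \varphi(d_2f)+\eta(e\cdot f)\big)$; $\delta_1(\psi)=\psi\circ d_3\circ\iota$. *)

theory Defs
  imports "Jordan_Normal_Form.Matrix"
begin

text \<open>Free module of rank n over the commutative ring 'a = carrier_vec n.
  R-linear maps between them are functions on vectors that are linear on the carrier.\<close>

definition ideal_cr :: "'a::comm_ring_1 set \<Rightarrow> bool" where
  "ideal_cr I \<longleftrightarrow> 0 \<in> I \<and> (\<forall>x\<in>I. \<forall>y\<in>I. x + y \<in> I) \<and> (\<forall>r. \<forall>x\<in>I. r * x \<in> I)"

definition noetherian_ring :: "'a::comm_ring_1 itself \<Rightarrow> bool" where
  "noetherian_ring _ \<longleftrightarrow> (\<forall>I::'a set. ideal_cr I \<longrightarrow>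
      (\<exists>G. finite G \<and> G \<subseteq> I \<and> I = {x. \<exists>c. x = (\<Sum>g\<in>G. c g * g)}))"

definition lin_map :: "nat \<Rightarrow> nat \<Rightarrow> ('a::comm_ring_1 vec \<Rightarrow> 'a vec) \<Rightarrow> bool" where
  "lin_map m n f \<longleftrightarrow> (\<forall>v\<in>carrier_vec m. f v \<in> carrier_vec n)
     \<and> (\<forall>u\<in>carrier_vec m. \<forall>v\<in>carrier_vec m. f (u + v) = f u + f v)
     \<and> (\<forall>c. \<forall>v\<in>carrier_vec m. f (c \<cdot>\<^sub>v v) = c \<cdot>\<^sub>v f v)"

definition bilin_map :: "nat \<Rightarrow> nat \<Rightarrow> nat \<Rightarrow> ('a::comm_ring_1 vec \<Rightarrow> 'a vec \<Rightarrow> 'a vec) \<Rightarrow> bool" where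
  "bilin_map m n k f \<longleftrightarrow> (\<forall>u\<in>carrier_vec m. lin_map n k (f u))
     \<and> (\<forall>v\<in>carrier_vec n. lin_map m k (\<lambda>u. f u v))"

text \<open>A bounded complex  0 -> M_k -> ... -> M_1 -> M_0 -> 0  of free modules,
  M_i = carrier_vec (ns!i), with differential fs!i : M_(i+1) -> M_i.
  Exact: exact at every M_i (including both ends, which are bordered by 0).\<close>

definition exact_seq :: "nat list \<Rightarrow> ('a::comm_ring_1 vec \<Rightarrow> 'a vec) list \<Rightarrow> bool" where
  "exact_seq ns fs \<longleftrightarrow> length ns = length fs + 1
     \<and> (\<forall>i<length fs. lin_map (ns!(i+1)) (ns!i) (fs!i))
     \<and> (\<forall>i<length ns. \<forall>v\<in>carrier_vec (ns!i).
          ((i = 0 \<or> (fs!(i-1)) v = 0\<^sub>v (ns!(i-1))) \<longleftrightarrow>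
           (if i < length fs then (\<exists>u\<in>carrier_vec (ns!(i+1)). (fs!i) u = v)
            else v = 0\<^sub>v (ns!i))))"

definition split_exact :: "nat list \<Rightarrow> ('a::comm_ring_1 vec \<Rightarrow> 'a vec) list \<Rightarrow> bool" where
  "split_exact ns fs \<longleftrightarrow> exact_seq ns fs
     \<and> (\<exists>ss. length ss = length fs \<and> (\<forall>i<length fs. lin_map (ns!i) (ns!(i+1)) (ss!i)
            \<and> (\<forall>v\<in>carrier_vec (ns!(i+1)). (fs!i) ((ss!i) ((fs!i) v)) = (fs!i) v)))"

text \<open>L is identified with R via a basis vector lam of L,
  so Hom(X,L) = Hom(X,R) = carrier_vec (rank X) via the dual basis (psi(x) = psi \<bullet> x),
  and the projection eta : A_3 -> L is the 1 x (q-1) matrix eta (coordinate w.r.t. lam).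
  iota : C = R^(q-2) -> A_3 is the inclusion. m12 e f = e \<cdot> f : A_1 x A_2 -> A_3.\<close>

definition eta_of :: "'a::comm_ring_1 mat \<Rightarrow> 'a vec \<Rightarrow> 'a" where
  "eta_of eta v = (eta *\<^sub>v v) $ 0"

definition B_delta4 :: "'a::comm_ring_1 mat \<Rightarrow> 'a mat \<Rightarrow> 'a vec \<Rightarrow> 'a vec" where
  "B_delta4 d3 iota c = d3 *\<^sub>v (iota *\<^sub>v c)"

definition B_delta3 :: "nat \<Rightarrow> 'a::comm_ring_1 mat \<Rightarrow> 'a mat \<Rightarrow> ('a vec \<Rightarrow> 'a vec \<Rightarrow> 'a vec)
    \<Rightarrow> 'a vec \<Rightarrow> 'a vec" where
  "B_delta3 n1 d2 eta m12 f =
     vec n1 (\<lambda>i. eta_of eta (m12 (unit_vec n1 i) f)) @\<^sub>v (d2 *\<^sub>v f)"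

definition B_delta2 :: "nat \<Rightarrow> nat \<Rightarrow> 'a::comm_ring_1 mat \<Rightarrow> 'a mat \<Rightarrow> ('a vec \<Rightarrow> 'a vec \<Rightarrow> 'a vec)
    \<Rightarrow> 'a vec \<Rightarrow> 'a vec" where
  "B_delta2 n1 n2 d2 eta m12 w =
     (let phi = vec_first w n1; e = vec_last w n1 in
      vec n2 (\<lambda>j. phi \<bullet> (d2 *\<^sub>v unit_vec n2 j) + eta_of eta (m12 e (unit_vec n2 j))))"

definition B_delta1 :: "nat \<Rightarrow> 'a::comm_ring_1 mat \<Rightarrow> 'a mat \<Rightarrow> 'a vec \<Rightarrow> 'a vec" where
  "B_delta1 nc d3 iota psi = vec nc (\<lambda>k. psi \<bullet> (d3 *\<^sub>v (iota *\<^sub>v unit_vec nc k)))"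

end

theory Submission
  imports Defs
begin

(* Exactness of A at A_0 gives e0 in A_1 with d1(e0) = 1, and exactness at A_3 makes d3 injective.
   Injectivity turns the Leibniz rules into identities in A_3, e.g. e.d3(x) = d1(e) x, and left
   multiplication by e0 contracts A: d2(e0.e) = e - d1(e) e0 and d3(e0.f) = f - e0.d2(f).
   With lambda the basis vector of L, the maps
     sigma4(f) = pr(e0.f),   sigma3(phi, e) = e0.e + phi(e0) d3(lambda),
     sigma2(psi) = (psi(e0.-), psi(d3(lambda)) e0),   sigma1 = transpose of sigma4
   form a contracting homotopy of B, and a complex with a contracting homotopy is split exact. *)

section \<open>Linear maps between free modules\<close>

lemma mult_mat_vec_smult:
  fixes A :: "'a::comm_ring_1 mat"
  assumes "A \<in> carrier_mat m n" "v \<in> carrier_vec n"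
  shows "A *\<^sub>v (c \<cdot>\<^sub>v v) = c \<cdot>\<^sub>v (A *\<^sub>v v)"
  using assms by (intro eq_vecI) (auto simp: scalar_prod_smult_distrib[of _ n])

lemma smult_zero_vec[simp]: "(c :: 'a::semiring_0) \<cdot>\<^sub>v 0\<^sub>v n = 0\<^sub>v n"
  by (intro eq_vecI) auto

lemma lin_map_carrier: "lin_map m n f \<Longrightarrow> v \<in> carrier_vec m \<Longrightarrow> f v \<in> carrier_vec n"
  unfolding lin_map_def by blast

lemma lin_map_additive:
  "lin_map m n f \<Longrightarrow> u \<in> carrier_vec m \<Longrightarrow> v \<in> carrier_vec m \<Longrightarrow> f (u + v) = f u + f v"
  unfolding lin_map_def by blast

lemma lin_map_homogeneous: "lin_map m n f \<Longrightarrow> v \<in> carrier_vec m \<Longrightarrow> f (c \<cdot>\<^sub>v v) = c \<cdot>\<^sub>v f v"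
  unfolding lin_map_def by blast

lemma lin_mapI:
  assumes "\<And>v. v \<in> carrier_vec m \<Longrightarrow> f v \<in> carrier_vec n"
    and "\<And>u v. u \<in> carrier_vec m \<Longrightarrow> v \<in> carrier_vec m \<Longrightarrow> f (u + v) = f u + f v"
    and "\<And>c v. v \<in> carrier_vec m \<Longrightarrow> f (c \<cdot>\<^sub>v v) = c \<cdot>\<^sub>v f v"
  shows "lin_map m n f"
  using assms unfolding lin_map_def by blast

lemma lin_map_zero:
  fixes f :: "'a::comm_ring_1 vec \<Rightarrow> 'a vec"
  assumes "lin_map m n f"
  shows "f (0\<^sub>v m) = 0\<^sub>v n"
proof -
  have "f (0\<^sub>v m) = f (0 \<cdot>\<^sub>v 0\<^sub>v m)" by simp
  also have "\<dots> = 0 \<cdot>\<^sub>v f (0\<^sub>v m)" by (rule lin_map_homogeneous[OF assms]) simp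
  also have "\<dots> = 0\<^sub>v n" using lin_map_carrier[OF assms, of "0\<^sub>v m"] by auto
  finally show ?thesis .
qed

lemma lin_map_diff:
  fixes f :: "'a::comm_ring_1 vec \<Rightarrow> 'a vec"
  assumes f: "lin_map m n f" and "u \<in> carrier_vec m" "v \<in> carrier_vec m"
  shows "f (u - v) = f u - f v"
proof -
  have "u - v = u + (-1) \<cdot>\<^sub>v v" using assms by (intro eq_vecI) auto
  then have "f (u - v) = f u + (-1) \<cdot>\<^sub>v f v"
    using assms by (simp add: lin_map_additive[OF f] lin_map_homogeneous[OF f])
  then show ?thesis using assms lin_map_carrier[OF f] by (intro eq_vecI) auto
qed

lemma lin_map_mat:
  fixes A :: "'a::comm_ring_1 mat"
  assumes "A \<in> carrier_mat m n"
  shows "lin_map n m (\<lambda>v. A *\<^sub>v v)"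
  using assms by (intro lin_mapI) (auto simp: mult_add_distrib_mat_vec mult_mat_vec_smult)

lemma lin_map_comp: "lin_map n m f \<Longrightarrow> lin_map m k g \<Longrightarrow> lin_map n k (\<lambda>x. g (f x))"
  by (intro lin_mapI) (auto simp: lin_map_carrier lin_map_additive lin_map_homogeneous)

lemma lin_map_plus:
  fixes f g :: "'a::comm_ring_1 vec \<Rightarrow> 'a vec"
  assumes f: "lin_map m n f" and g: "lin_map m n g"
  shows "lin_map m n (\<lambda>v. f v + g v)"
proof (intro lin_mapI)
  fix u v :: "'a vec" assume "u \<in> carrier_vec m" "v \<in> carrier_vec m"
  moreover from this have "f u \<in> carrier_vec n" "f v \<in> carrier_vec n" "g u \<in> carrier_vec n" "g v \<in> carrier_vec n"
    using lin_map_carrier[OF f] lin_map_carrier[OF g] by auto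
  ultimately show "f (u + v) + g (u + v) = (f u + g u) + (f v + g v)"
    by (intro eq_vecI) (auto simp: lin_map_additive[OF f] lin_map_additive[OF g])
next
  fix c and v :: "'a vec" assume "v \<in> carrier_vec m"
  moreover from this have "f v \<in> carrier_vec n" "g v \<in> carrier_vec n"
    using lin_map_carrier[OF f] lin_map_carrier[OF g] by auto
  ultimately show "f (c \<cdot>\<^sub>v v) + g (c \<cdot>\<^sub>v v) = c \<cdot>\<^sub>v (f v + g v)"
    by (simp add: lin_map_homogeneous[OF f] lin_map_homogeneous[OF g] smult_add_distrib_vec)
next
  fix v :: "'a vec" assume "v \<in> carrier_vec m"
  then show "f v + g v \<in> carrier_vec n" by (simp add: lin_map_carrier[OF f] lin_map_carrier[OF g])
qed

lemma lin_map_append: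
  fixes f g :: "'a::comm_ring_1 vec \<Rightarrow> 'a vec"
  assumes f: "lin_map m n f" and g: "lin_map m k g"
  shows "lin_map m (n + k) (\<lambda>v. f v @\<^sub>v g v)"
proof (intro lin_mapI)
  fix u v :: "'a vec" assume "u \<in> carrier_vec m" "v \<in> carrier_vec m"
  moreover from this have "f u \<in> carrier_vec n" "f v \<in> carrier_vec n" "g u \<in> carrier_vec k" "g v \<in> carrier_vec k"
    using lin_map_carrier[OF f] lin_map_carrier[OF g] by auto
  ultimately show "f (u + v) @\<^sub>v g (u + v) = (f u @\<^sub>v g u) + (f v @\<^sub>v g v)"
    by (simp add: lin_map_additive[OF f] lin_map_additive[OF g] append_vec_add)
next
  fix c and v :: "'a vec" assume "v \<in> carrier_vec m"
  then show "f (c \<cdot>\<^sub>v v) @\<^sub>v g (c \<cdot>\<^sub>v v) = c \<cdot>\<^sub>v (f v @\<^sub>v g v)"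
    by (intro eq_vecI) (auto simp: lin_map_homogeneous[OF f] lin_map_homogeneous[OF g])
qed (use lin_map_carrier[OF f] lin_map_carrier[OF g] in auto)

lemma lin_map_vec_first: "lin_map (n + k) n (\<lambda>v. vec_first v n)"
  by (intro lin_mapI) (auto simp: vec_first_def)

lemma lin_map_vec_last: "lin_map (n + k) k (\<lambda>v. vec_last v k)"
  by (intro lin_mapI) (auto simp: vec_last_def)

lemma vec_first_append[simp]: "a \<in> carrier_vec n \<Longrightarrow> vec_first (a @\<^sub>v b) n = a"
  by (intro eq_vecI) (auto simp: vec_first_def)

lemma vec_last_append[simp]: "b \<in> carrier_vec k \<Longrightarrow> vec_last (a @\<^sub>v b) k = b"
  by (intro eq_vecI) (auto simp: vec_last_def)

lemma lin_map_vecI: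
  assumes "\<And>j u v. j < n \<Longrightarrow> u \<in> carrier_vec m \<Longrightarrow> v \<in> carrier_vec m \<Longrightarrow> h (u + v) j = h u j + h v j"
    and "\<And>j c v. j < n \<Longrightarrow> v \<in> carrier_vec m \<Longrightarrow> h (c \<cdot>\<^sub>v v) j = c * h v j"
  shows "lin_map m n (\<lambda>v. vec n (h v))"
  using assms by (intro lin_mapI) auto

lemma lin_map_scalar_prod_smult:
  fixes a b :: "'a::comm_ring_1 vec"
  assumes "a \<in> carrier_vec m" "b \<in> carrier_vec n"
  shows "lin_map m n (\<lambda>v. (v \<bullet> a) \<cdot>\<^sub>v b)"
  using assms by (intro lin_mapI) (auto simp: add_scalar_prod_distrib[of _ m] add_smult_distrib_vec)

lemma linear_functional_eq_scalar_prod: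
  fixes g :: "'a::comm_ring_1 vec \<Rightarrow> 'a"
  assumes additive: "\<And>u v. u \<in> carrier_vec n \<Longrightarrow> v \<in> carrier_vec n \<Longrightarrow> g (u + v) = g u + g v"
    and homogeneous: "\<And>c v. v \<in> carrier_vec n \<Longrightarrow> g (c \<cdot>\<^sub>v v) = c * g v"
    and x: "x \<in> carrier_vec n"
  shows "vec n (\<lambda>i. g (unit_vec n i)) \<bullet> x = g x"
proof -
  define trunc where "trunc k = vec n (\<lambda>i. if i < k then x $ i else 0)" for k
  have "g (trunc k) = (\<Sum>i<k. x $ i * g (unit_vec n i))" if "k \<le> n" for k
    using that
  proof (induction k)
    case 0
    have "trunc 0 = 0 \<cdot>\<^sub>v 0\<^sub>v n" by (auto simp: trunc_def)
    then show ?case using homogeneous[of "0\<^sub>v n" 0] by simp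
  next
    case (Suc k)
    have "trunc (Suc k) = trunc k + x $ k \<cdot>\<^sub>v unit_vec n k"
      using Suc.prems by (intro eq_vecI) (auto simp: trunc_def less_Suc_eq)
    then show ?case
      using Suc by (simp add: additive homogeneous trunc_def)
  qed
  moreover have "trunc n = x" using x by (auto simp: trunc_def)
  ultimately have "g x = (\<Sum>i<n. x $ i * g (unit_vec n i))" by (metis order_refl)
  also have "\<dots> = vec n (\<lambda>i. g (unit_vec n i)) \<bullet> x"
    using x by (auto simp: scalar_prod_def mult.commute lessThan_atLeast0 intro!: sum.cong)
  finally show ?thesis ..
qed

definition dual_map :: "nat \<Rightarrow> ('a::comm_ring_1 vec \<Rightarrow> 'a vec) \<Rightarrow> 'a vec \<Rightarrow> 'a vec" where
  "dual_map n f psi = vec n (\<lambda>i. psi \<bullet> f (unit_vec n i))"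

lemma dual_map_carrier[simp]: "dual_map n f psi \<in> carrier_vec n"
  by (simp add: dual_map_def)

lemma scalar_prod_dual_map:
  assumes f: "lin_map n m f" and "psi \<in> carrier_vec m" "x \<in> carrier_vec n"
  shows "dual_map n f psi \<bullet> x = psi \<bullet> f x"
  unfolding dual_map_def using assms lin_map_carrier[OF f]
  by (intro linear_functional_eq_scalar_prod)
     (auto simp: lin_map_additive[OF f] lin_map_homogeneous[OF f] scalar_prod_add_distrib[of _ m])

lemma lin_map_dual_map:
  assumes "\<And>v. v \<in> carrier_vec n \<Longrightarrow> f v \<in> carrier_vec m"
  shows "lin_map m n (dual_map n f)"
  unfolding dual_map_def using assms
  by (intro lin_map_vecI) (auto simp: add_scalar_prod_distrib[of _ m])

lemma dual_map_comp:
  assumes f: "lin_map n m f" and g: "\<And>v. v \<in> carrier_vec k \<Longrightarrow> g v \<in> carrier_vec n"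
    and "psi \<in> carrier_vec m"
  shows "dual_map k g (dual_map n f psi) = dual_map k (\<lambda>v. f (g v)) psi"
  unfolding dual_map_def[of k] using assms by (intro eq_vecI) (auto simp: scalar_prod_dual_map)

lemma dual_map_id:
  assumes "\<And>v. v \<in> carrier_vec n \<Longrightarrow> f v = v" and "psi \<in> carrier_vec n"
  shows "dual_map n f psi = psi"
  unfolding dual_map_def using assms by (intro eq_vecI) auto

section \<open>Exactness and contracting homotopies\<close>

lemma exact_seqD:
  assumes "exact_seq ns fs" "i < length ns" "v \<in> carrier_vec (ns!i)"
  shows "(i = 0 \<or> (fs!(i-1)) v = 0\<^sub>v (ns!(i-1))) \<longleftrightarrow>
    (if i < length fs then \<exists>u\<in>carrier_vec (ns!(i+1)). (fs!i) u = v else v = 0\<^sub>v (ns!i))"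
  using assms unfolding exact_seq_def by blast

lemma exact_seq_length: "exact_seq ns fs \<Longrightarrow> length ns = length fs + 1"
  unfolding exact_seq_def by blast

lemma exact_seq_surjective_first:
  assumes "exact_seq ns fs" "fs \<noteq> []" "v \<in> carrier_vec (ns!0)"
  shows "\<exists>u\<in>carrier_vec (ns!1). (fs!0) u = v"
  using exact_seqD[OF assms(1) _ assms(3)] exact_seq_length[OF assms(1)] assms(2) by simp

lemma exact_seq_injective_last:
  assumes "exact_seq ns fs" "fs \<noteq> []" and n: "n = length fs"
    and "v \<in> carrier_vec (ns!n)" "(fs!(n-1)) v = 0\<^sub>v (ns!(n-1))"
  shows "v = 0\<^sub>v (ns!n)"
  using exact_seqD[OF assms(1) _ assms(4)] exact_seq_length[OF assms(1)] assms(5) n by simp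

lemma split_exact_if_contracting_homotopy:
  fixes fs ss :: "('a::comm_ring_1 vec \<Rightarrow> 'a vec) list"
  assumes len: "length ns = length fs + 1" "length ss = length fs"
    and f_lin: "\<And>i. i < length fs \<Longrightarrow> lin_map (ns!(i+1)) (ns!i) (fs!i)"
    and s_lin: "\<And>i. i < length fs \<Longrightarrow> lin_map (ns!i) (ns!(i+1)) (ss!i)"
    and complex: "\<And>i v. i + 1 < length fs \<Longrightarrow> v \<in> carrier_vec (ns!(i+2)) \<Longrightarrow>
        (fs!i) ((fs!(i+1)) v) = 0\<^sub>v (ns!i)"
    and homotopy: "\<And>i v. i < length ns \<Longrightarrow> v \<in> carrier_vec (ns!i) \<Longrightarrow>
        (if i < length fs then (fs!i) ((ss!i) v) else 0\<^sub>v (ns!i))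
      + (if i = 0 then 0\<^sub>v (ns!i) else (ss!(i-1)) ((fs!(i-1)) v)) = v"
  shows "split_exact ns fs"
proof -
  have cycle_boundary: "(fs!i) ((ss!i) v) = v"
    if i: "i < length fs" and v: "v \<in> carrier_vec (ns!i)" and cycle: "i = 0 \<or> (fs!(i-1)) v = 0\<^sub>v (ns!(i-1))"
    for i v
  proof -
    have "(fs!i) ((ss!i) v) \<in> carrier_vec (ns!i)"
      using lin_map_carrier[OF f_lin lin_map_carrier[OF s_lin v]] i by simp
    moreover have "i \<noteq> 0 \<Longrightarrow> (ss!(i-1)) ((fs!(i-1)) v) = 0\<^sub>v (ns!i)"
      using cycle lin_map_zero[OF s_lin, of "i-1"] i by simp
    ultimately show ?thesis using homotopy[of i v] i v len by (cases "i = 0") auto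
  qed
  have top_cycle_zero: "v = 0\<^sub>v (ns!i)"
    if i: "i = length fs" and v: "v \<in> carrier_vec (ns!i)" and cycle: "i = 0 \<or> (fs!(i-1)) v = 0\<^sub>v (ns!(i-1))"
    for i v
  proof -
    have "i \<noteq> 0 \<Longrightarrow> (ss!(i-1)) ((fs!(i-1)) v) = 0\<^sub>v (ns!i)"
      using cycle lin_map_zero[OF s_lin, of "i-1"] i by simp
    then show ?thesis using homotopy[of i v] i v len by (cases "i = 0") auto
  qed
  have boundary_cycle: "i = 0 \<or> (fs!(i-1)) ((fs!i) u) = 0\<^sub>v (ns!(i-1))"
    if "i < length fs" "u \<in> carrier_vec (ns!(i+1))" for i u
    using complex[of "i-1" u] that by (cases i) auto
  have "exact_seq ns fs"
    unfolding exact_seq_def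
  proof (intro conjI allI impI ballI)
    fix i and v :: "'a vec" assume i: "i < length ns" and v: "v \<in> carrier_vec (ns!i)"
    show "(i = 0 \<or> (fs!(i-1)) v = 0\<^sub>v (ns!(i-1))) \<longleftrightarrow>
      (if i < length fs then \<exists>u\<in>carrier_vec (ns!(i+1)). (fs!i) u = v else v = 0\<^sub>v (ns!i))"
    proof (cases "i < length fs")
      case True
      then show ?thesis
        using cycle_boundary[OF True v] boundary_cycle[OF True] lin_map_carrier[OF s_lin[OF True] v]
        by auto
    next
      case False
      then have "i = length fs" using i len by simp
      then show ?thesis
        using top_cycle_zero[of i v] v lin_map_zero[OF f_lin, of "i-1"] False by (cases i) auto
    qed
  qed (use len f_lin in auto)
  moreover have "(fs!i) ((ss!i) ((fs!i) v)) = (fs!i) v"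
    if "i < length fs" "v \<in> carrier_vec (ns!(i+1))" for i v
    using cycle_boundary boundary_cycle lin_map_carrier[OF f_lin] that by simp
  ultimately show ?thesis
    unfolding split_exact_def using len s_lin by blast
qed

section \<open>The DG algebra A\<close>

locale dga3 =
  fixes n1 n2 n3 :: nat
    and d1 d2 d3 :: "'a::comm_ring_1 mat"
    and m11 m12 :: "'a vec \<Rightarrow> 'a vec \<Rightarrow> 'a vec"
  assumes d1: "d1 \<in> carrier_mat 1 n1"
    and d2: "d2 \<in> carrier_mat n1 n2"
    and d3: "d3 \<in> carrier_mat n2 n3"
    and d1_d2: "d1 * d2 = 0\<^sub>m 1 n2"
    and d2_d3: "d2 * d3 = 0\<^sub>m n1 n3"
    and m11: "bilin_map n1 n1 n2 m11"
    and m12: "bilin_map n1 n2 n3 m12"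
    and m11_anticomm: "\<And>e e'. e \<in> carrier_vec n1 \<Longrightarrow> e' \<in> carrier_vec n1 \<Longrightarrow> m11 e e' = - m11 e' e"
    and leibniz1: "\<And>e e'. e \<in> carrier_vec n1 \<Longrightarrow> e' \<in> carrier_vec n1 \<Longrightarrow>
       d2 *\<^sub>v m11 e e' = ((d1 *\<^sub>v e) $ 0) \<cdot>\<^sub>v e' - ((d1 *\<^sub>v e') $ 0) \<cdot>\<^sub>v e"
    and leibniz2: "\<And>e f. e \<in> carrier_vec n1 \<Longrightarrow> f \<in> carrier_vec n2 \<Longrightarrow>
       d3 *\<^sub>v m12 e f = ((d1 *\<^sub>v e) $ 0) \<cdot>\<^sub>v f + m11 (d2 *\<^sub>v f) e"
begin

lemma dim_d[simp]:
  "dim_col d1 = n1" "dim_row d2 = n1" "dim_col d2 = n2" "dim_row d3 = n2" "dim_col d3 = n3"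
  using d1 d2 d3 by auto

lemma d_carrier[simp]:
  "e \<in> carrier_vec n1 \<Longrightarrow> d1 *\<^sub>v e \<in> carrier_vec 1"
  "f \<in> carrier_vec n2 \<Longrightarrow> d2 *\<^sub>v f \<in> carrier_vec n1"
  "x \<in> carrier_vec n3 \<Longrightarrow> d3 *\<^sub>v x \<in> carrier_vec n2"
  using d1 d2 d3 by auto

lemma lin_map_m11_right: "u \<in> carrier_vec n1 \<Longrightarrow> lin_map n1 n2 (m11 u)"
  using m11 unfolding bilin_map_def by blast

lemma lin_map_m11_left: "v \<in> carrier_vec n1 \<Longrightarrow> lin_map n1 n2 (\<lambda>u. m11 u v)"
  using m11 unfolding bilin_map_def by blast

lemma lin_map_m12_right: "u \<in> carrier_vec n1 \<Longrightarrow> lin_map n2 n3 (m12 u)"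
  using m12 unfolding bilin_map_def by blast

lemma lin_map_m12_left: "v \<in> carrier_vec n2 \<Longrightarrow> lin_map n1 n3 (\<lambda>u. m12 u v)"
  using m12 unfolding bilin_map_def by blast

lemma m11_carrier[simp]: "u \<in> carrier_vec n1 \<Longrightarrow> v \<in> carrier_vec n1 \<Longrightarrow> m11 u v \<in> carrier_vec n2"
  using lin_map_carrier[OF lin_map_m11_right] by blast

lemma m12_carrier[simp]: "u \<in> carrier_vec n1 \<Longrightarrow> v \<in> carrier_vec n2 \<Longrightarrow> m12 u v \<in> carrier_vec n3"
  using lin_map_carrier[OF lin_map_m12_right] by blast

lemma d3_zero[simp]: "d3 *\<^sub>v 0\<^sub>v n3 = 0\<^sub>v n2"
  by (rule lin_map_zero[OF lin_map_mat[OF d3]])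

lemma dim_m11[simp]: "u \<in> carrier_vec n1 \<Longrightarrow> v \<in> carrier_vec n1 \<Longrightarrow> dim_vec (m11 u v) = n2"
  by (simp add: carrier_vecD)

lemma dim_m12[simp]: "u \<in> carrier_vec n1 \<Longrightarrow> v \<in> carrier_vec n2 \<Longrightarrow> dim_vec (m12 u v) = n3"
  by (simp add: carrier_vecD)

lemma d2_d3_vec:
  assumes "x \<in> carrier_vec n3"
  shows "d2 *\<^sub>v (d3 *\<^sub>v x) = 0\<^sub>v n1"
proof -
  have "d2 *\<^sub>v (d3 *\<^sub>v x) = (d2 * d3) *\<^sub>v x" using assoc_mult_mat_vec[OF d2 d3 assms] by simp
  then show ?thesis using assms by (simp add: d2_d3) (intro eq_vecI, auto)
qed

lemma d1_d2_vec:
  assumes "f \<in> carrier_vec n2"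
  shows "(d1 *\<^sub>v (d2 *\<^sub>v f)) $ 0 = 0"
proof -
  have "d1 *\<^sub>v (d2 *\<^sub>v f) = (d1 * d2) *\<^sub>v f" using assoc_mult_mat_vec[OF d1 d2 assms] by simp
  then show ?thesis using assms by (simp add: d1_d2)
qed

end

locale acyclic_dga3 = dga3 +
  fixes e0 :: "'a::comm_ring_1 vec"
  assumes e0[simp]: "e0 \<in> carrier_vec n1"
    and d1_e0: "(d1 *\<^sub>v e0) $ 0 = 1"
    and d3_injective: "\<And>x. x \<in> carrier_vec n3 \<Longrightarrow> d3 *\<^sub>v x = 0\<^sub>v n2 \<Longrightarrow> x = 0\<^sub>v n3"
begin

lemma dim_e0[simp]: "dim_vec e0 = n1"
  by simp

lemma d3_cancel:
  assumes "x \<in> carrier_vec n3" "y \<in> carrier_vec n3" "d3 *\<^sub>v x = d3 *\<^sub>v y"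
  shows "x = y"
proof -
  have "d3 *\<^sub>v (x - y) = 0\<^sub>v n2"
    using assms lin_map_diff[OF lin_map_mat[OF d3]] by (intro eq_vecI) auto
  then have diff: "x - y = 0\<^sub>v n3" using assms d3_injective by simp
  show ?thesis
  proof (rule eq_vecI)
    fix i assume i: "i < dim_vec y"
    with diff assms have "(x - y) $ i = 0" by simp
    with i assms show "x $ i = y $ i" by simp
  qed (use assms in simp)
qed

lemma mult_d3: "e \<in> carrier_vec n1 \<Longrightarrow> x \<in> carrier_vec n3 \<Longrightarrow> m12 e (d3 *\<^sub>v x) = (d1 *\<^sub>v e) $ 0 \<cdot>\<^sub>v x"
  by (rule d3_cancel)
     (simp_all add: leibniz2 d2_d3_vec lin_map_zero[OF lin_map_m11_left] mult_mat_vec_smult[OF d3])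

lemma mult_d2_anticomm:
  assumes f: "f \<in> carrier_vec n2" and g: "g \<in> carrier_vec n2"
  shows "m12 (d2 *\<^sub>v g) f + m12 (d2 *\<^sub>v f) g = 0\<^sub>v n3"
proof (rule d3_cancel)
  have "d3 *\<^sub>v m12 (d2 *\<^sub>v g) f = m11 (d2 *\<^sub>v f) (d2 *\<^sub>v g)"
    "d3 *\<^sub>v m12 (d2 *\<^sub>v f) g = - m11 (d2 *\<^sub>v f) (d2 *\<^sub>v g)"
    using assms by (auto simp: leibniz2 d1_d2_vec m11_anticomm[of "d2 *\<^sub>v g"] intro!: eq_vecI)
  then show "d3 *\<^sub>v (m12 (d2 *\<^sub>v g) f + m12 (d2 *\<^sub>v f) g) = d3 *\<^sub>v 0\<^sub>v n3"
    using assms by (simp add: mult_add_distrib_mat_vec[OF d3])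
qed (use assms in auto)

lemma d2_unit_mult: "e \<in> carrier_vec n1 \<Longrightarrow> d2 *\<^sub>v m11 e0 e = e - (d1 *\<^sub>v e) $ 0 \<cdot>\<^sub>v e0"
  by (simp add: leibniz1 d1_e0)

lemma d3_unit_mult:
  assumes f: "f \<in> carrier_vec n2"
  shows "d3 *\<^sub>v m12 e0 f = f - m11 e0 (d2 *\<^sub>v f)"
  using assms by (simp add: leibniz2 d1_e0 m11_anticomm[of "d2 *\<^sub>v f" e0]) (intro eq_vecI, auto)

lemma unit_mult_d3: "x \<in> carrier_vec n3 \<Longrightarrow> m12 e0 (d3 *\<^sub>v x) = x"
  by (simp add: mult_d3 d1_e0)

lemma mult_unit_mult_anticomm:
  assumes e: "e \<in> carrier_vec n1" and x: "x \<in> carrier_vec n1"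
  shows "m12 e (m11 e0 x) + m12 x (m11 e0 e) = 0\<^sub>v n3"
proof (rule d3_cancel)
  let ?a = "(d1 *\<^sub>v e) $ 0" and ?b = "(d1 *\<^sub>v x) $ 0"
  have "d3 *\<^sub>v m12 e (m11 e0 x) = ?a \<cdot>\<^sub>v m11 e0 x + (m11 x e - ?b \<cdot>\<^sub>v m11 e0 e)"
    using assms by (simp add: leibniz2 d2_unit_mult lin_map_diff[OF lin_map_m11_left]
        lin_map_homogeneous[OF lin_map_m11_left])
  moreover have "d3 *\<^sub>v m12 x (m11 e0 e) = ?b \<cdot>\<^sub>v m11 e0 e + (m11 e x - ?a \<cdot>\<^sub>v m11 e0 x)"
    using assms by (simp add: leibniz2 d2_unit_mult lin_map_diff[OF lin_map_m11_left]
        lin_map_homogeneous[OF lin_map_m11_left])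
  moreover have "m11 e x = - m11 x e" using assms m11_anticomm by blast
  ultimately show "d3 *\<^sub>v (m12 e (m11 e0 x) + m12 x (m11 e0 e)) = d3 *\<^sub>v 0\<^sub>v n3"
    using assms by (simp add: mult_add_distrib_mat_vec[OF d3]) (intro eq_vecI, auto simp: algebra_simps)
qed (use assms in auto)

end

section \<open>The complex B(A, C)\<close>

locale B_complex = acyclic_dga3 n1 n2 n3 d1 d2 d3 m11 m12 e0
  for n1 n2 n3 :: nat and d1 d2 d3 :: "'a::comm_ring_1 mat"
    and m11 m12 :: "'a vec \<Rightarrow> 'a vec \<Rightarrow> 'a vec" and e0 :: "'a vec" +
  fixes nc :: nat and iota lam pr eta :: "'a mat"
  assumes iota: "iota \<in> carrier_mat n3 nc"
    and lam: "lam \<in> carrier_mat n3 1"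
    and pr: "pr \<in> carrier_mat nc n3"
    and eta: "eta \<in> carrier_mat 1 n3"
    and pr_iota: "pr * iota = 1\<^sub>m nc"
    and eta_lam: "eta * lam = 1\<^sub>m 1"
    and eta_iota: "eta * iota = 0\<^sub>m 1 nc"
    and iota_pr_lam_eta: "iota * pr + lam * eta = 1\<^sub>m n3"
begin

abbreviation "E \<equiv> eta_of eta"

definition lam_vec where "lam_vec = lam *\<^sub>v unit_vec 1 0"

definition d3_lam where "d3_lam = d3 *\<^sub>v lam_vec"

abbreviation "delta1 \<equiv> B_delta1 nc d3 iota"
abbreviation "delta2 \<equiv> B_delta2 n1 n2 d2 eta m12"
abbreviation "delta3 \<equiv> B_delta3 n1 d2 eta m12"
abbreviation "delta4 \<equiv> B_delta4 d3 iota"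

definition sigma4 where
  "sigma4 f = pr *\<^sub>v m12 e0 f"

definition sigma3 where
  "sigma3 w = m11 e0 (vec_last w n1) + (vec_first w n1 \<bullet> e0) \<cdot>\<^sub>v d3_lam"

definition sigma2 where
  "sigma2 psi = dual_map n1 (m11 e0) psi @\<^sub>v (psi \<bullet> d3_lam) \<cdot>\<^sub>v e0"

definition sigma1 where
  "sigma1 = dual_map n2 sigma4"

lemma dim_dec[simp]:
  "dim_row iota = n3" "dim_col iota = nc" "dim_row pr = nc" "dim_col pr = n3"
  "dim_col eta = n3" "dim_row lam = n3"
  using iota pr eta lam by auto

lemma dec_carrier[simp]:
  "c \<in> carrier_vec nc \<Longrightarrow> iota *\<^sub>v c \<in> carrier_vec n3"
  "x \<in> carrier_vec n3 \<Longrightarrow> pr *\<^sub>v x \<in> carrier_vec nc"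
  "lam_vec \<in> carrier_vec n3"
  "d3_lam \<in> carrier_vec n2"
  using iota pr lam by (auto simp: lam_vec_def d3_lam_def)

lemma row_eta_carrier[simp]: "row eta 0 \<in> carrier_vec n3"
  by (rule carrier_vecI) simp

lemma dim_d3_lam[simp]: "dim_vec d3_lam = n2"
  by (simp add: d3_lam_def)

lemma eta_of_eq_scalar_prod: "E v = row eta 0 \<bullet> v"
  unfolding eta_of_def using eta by simp

lemma eta_of_add: "u \<in> carrier_vec n3 \<Longrightarrow> v \<in> carrier_vec n3 \<Longrightarrow> E (u + v) = E u + E v"
  unfolding eta_of_eq_scalar_prod using eta by (simp add: scalar_prod_add_distrib[of _ n3])

lemma eta_of_smult: "v \<in> carrier_vec n3 \<Longrightarrow> E (c \<cdot>\<^sub>v v) = c * E v"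
  unfolding eta_of_eq_scalar_prod using eta by (simp add: scalar_prod_smult_distrib[of _ n3])

lemma eta_of_zero[simp]: "E (0\<^sub>v n3) = 0"
  unfolding eta_of_eq_scalar_prod using eta by simp

lemma eta_of_lam_vec[simp]: "E lam_vec = 1"
  using assoc_mult_mat_vec[OF eta lam, of "unit_vec 1 0"] by (simp add: eta_of_def lam_vec_def eta_lam)

lemma eta_of_iota[simp]:
  assumes "c \<in> carrier_vec nc"
  shows "E (iota *\<^sub>v c) = 0"
proof -
  have "eta *\<^sub>v (iota *\<^sub>v c) = 0\<^sub>m 1 nc *\<^sub>v c"
    using assoc_mult_mat_vec[OF eta iota assms] by (simp add: eta_iota)
  then show ?thesis using assms by (simp add: eta_of_def)
qed

lemma pr_iota_vec[simp]: "c \<in> carrier_vec nc \<Longrightarrow> pr *\<^sub>v (iota *\<^sub>v c) = c"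
  using assoc_mult_mat_vec[OF pr iota, of c] by (simp add: pr_iota)

lemma decompose_A3:
  assumes y: "y \<in> carrier_vec n3"
  shows "y = iota *\<^sub>v (pr *\<^sub>v y) + E y \<cdot>\<^sub>v lam_vec"
proof -
  have "y = (iota * pr + lam * eta) *\<^sub>v y" using y by (simp add: iota_pr_lam_eta)
  also have "\<dots> = iota *\<^sub>v (pr *\<^sub>v y) + lam *\<^sub>v (eta *\<^sub>v y)"
    using iota pr lam eta y by (simp add: add_mult_distrib_mat_vec[of _ n3 n3])
  also have "eta *\<^sub>v y = E y \<cdot>\<^sub>v unit_vec 1 0"
    using eta by (intro eq_vecI) (auto simp: eta_of_def)
  also have "lam *\<^sub>v (E y \<cdot>\<^sub>v unit_vec 1 0) = E y \<cdot>\<^sub>v lam_vec"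
    unfolding lam_vec_def by (rule mult_mat_vec_smult[OF lam]) simp
  finally show ?thesis .
qed

lemma mult_d3_lam: "e \<in> carrier_vec n1 \<Longrightarrow> m12 e d3_lam = (d1 *\<^sub>v e) $ 0 \<cdot>\<^sub>v lam_vec"
  unfolding d3_lam_def by (simp add: mult_d3)

lemma d2_d3_lam[simp]: "d2 *\<^sub>v d3_lam = 0\<^sub>v n1"
  unfolding d3_lam_def by (simp add: d2_d3_vec)

lemma eta_of_mult_d3:
  "e \<in> carrier_vec n1 \<Longrightarrow> x \<in> carrier_vec n3 \<Longrightarrow> E (m12 e (d3 *\<^sub>v x)) = (d1 *\<^sub>v e) $ 0 * E x"
  by (simp add: mult_d3 eta_of_smult)

lemma dim_sigma1[simp]: "dim_vec (sigma1 chi) = n2"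
  by (simp add: sigma1_def dual_map_def)

lemma delta1_eq_dual_map: "delta1 = dual_map nc delta4"
  by (simp add: fun_eq_iff B_delta1_def B_delta4_def dual_map_def)

lemma dim_delta2[simp]: "dim_vec (delta2 w) = n2"
  by (simp add: B_delta2_def Let_def)

lemma delta2_index:
  "j < n2 \<Longrightarrow> delta2 w $ j = vec_first w n1 \<bullet> (d2 *\<^sub>v unit_vec n2 j) + E (m12 (vec_last w n1) (unit_vec n2 j))"
  by (simp add: B_delta2_def Let_def)

lemma scalar_prod_delta2:
  assumes g: "g \<in> carrier_vec n2"
  shows "delta2 w \<bullet> g = vec_first w n1 \<bullet> (d2 *\<^sub>v g) + E (m12 (vec_last w n1) g)"
  unfolding B_delta2_def Let_def
proof (rule linear_functional_eq_scalar_prod[OF _ _ g])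
  fix u v :: "'a vec" assume "u \<in> carrier_vec n2" "v \<in> carrier_vec n2"
  then show "vec_first w n1 \<bullet> (d2 *\<^sub>v (u + v)) + E (m12 (vec_last w n1) (u + v))
    = (vec_first w n1 \<bullet> (d2 *\<^sub>v u) + E (m12 (vec_last w n1) u))
    + (vec_first w n1 \<bullet> (d2 *\<^sub>v v) + E (m12 (vec_last w n1) v))"
    by (simp add: mult_add_distrib_mat_vec[OF d2] scalar_prod_add_distrib[of _ n1] eta_of_add
        lin_map_additive[OF lin_map_m12_right])
next
  fix c and v :: "'a vec" assume "v \<in> carrier_vec n2"
  then show "vec_first w n1 \<bullet> (d2 *\<^sub>v (c \<cdot>\<^sub>v v)) + E (m12 (vec_last w n1) (c \<cdot>\<^sub>v v))
    = c * (vec_first w n1 \<bullet> (d2 *\<^sub>v v) + E (m12 (vec_last w n1) v))"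
    by (simp add: mult_mat_vec_smult[OF d2] eta_of_smult lin_map_homogeneous[OF lin_map_m12_right]
        distrib_left)
qed

lemma vec_first_delta3: "vec_first (delta3 f) n1 = vec n1 (\<lambda>i. E (m12 (unit_vec n1 i) f))"
  by (simp add: B_delta3_def)

lemma vec_last_delta3: "f \<in> carrier_vec n2 \<Longrightarrow> vec_last (delta3 f) n1 = d2 *\<^sub>v f"
  by (simp add: B_delta3_def)

lemma scalar_prod_vec_first_delta3:
  assumes "f \<in> carrier_vec n2" "x \<in> carrier_vec n1"
  shows "vec_first (delta3 f) n1 \<bullet> x = E (m12 x f)"
  unfolding vec_first_delta3 eta_of_eq_scalar_prod
  using assms eta by (intro linear_functional_eq_scalar_prod)
    (auto simp: lin_map_additive[OF lin_map_m12_left] lin_map_homogeneous[OF lin_map_m12_left]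
      scalar_prod_add_distrib[of _ n3])

lemma lin_map_delta4: "lin_map nc n2 delta4"
  unfolding B_delta4_def[abs_def] by (rule lin_map_comp[OF lin_map_mat[OF iota] lin_map_mat[OF d3]])

lemma lin_map_delta3: "lin_map n2 (n1 + n1) delta3"
  unfolding B_delta3_def[abs_def]
proof (rule lin_map_append[OF lin_map_vecI lin_map_mat[OF d2]])
  fix j and u v :: "'a vec" assume "j < n1" "u \<in> carrier_vec n2" "v \<in> carrier_vec n2"
  then show "E (m12 (unit_vec n1 j) (u + v)) = E (m12 (unit_vec n1 j) u) + E (m12 (unit_vec n1 j) v)"
    by (simp add: lin_map_additive[OF lin_map_m12_right] eta_of_add)
next
  fix j c and v :: "'a vec" assume "j < n1" "v \<in> carrier_vec n2"
  then show "E (m12 (unit_vec n1 j) (c \<cdot>\<^sub>v v)) = c * E (m12 (unit_vec n1 j) v)"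
    by (simp add: lin_map_homogeneous[OF lin_map_m12_right] eta_of_smult)
qed

lemma lin_map_delta2: "lin_map (n1 + n1) n2 delta2"
  unfolding B_delta2_def[abs_def] Let_def
proof (rule lin_map_vecI)
  fix j and u v :: "'a vec" assume "j < n2" "u \<in> carrier_vec (n1 + n1)" "v \<in> carrier_vec (n1 + n1)"
  then show "vec_first (u + v) n1 \<bullet> (d2 *\<^sub>v unit_vec n2 j) + E (m12 (vec_last (u + v) n1) (unit_vec n2 j))
    = (vec_first u n1 \<bullet> (d2 *\<^sub>v unit_vec n2 j) + E (m12 (vec_last u n1) (unit_vec n2 j)))
    + (vec_first v n1 \<bullet> (d2 *\<^sub>v unit_vec n2 j) + E (m12 (vec_last v n1) (unit_vec n2 j)))"
    by (simp add: lin_map_additive[OF lin_map_vec_first] lin_map_additive[OF lin_map_vec_last]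
        add_scalar_prod_distrib[of _ n1] lin_map_additive[OF lin_map_m12_left] eta_of_add)
next
  fix j c and v :: "'a vec" assume "j < n2" "v \<in> carrier_vec (n1 + n1)"
  then show "vec_first (c \<cdot>\<^sub>v v) n1 \<bullet> (d2 *\<^sub>v unit_vec n2 j) + E (m12 (vec_last (c \<cdot>\<^sub>v v) n1) (unit_vec n2 j))
    = c * (vec_first v n1 \<bullet> (d2 *\<^sub>v unit_vec n2 j) + E (m12 (vec_last v n1) (unit_vec n2 j)))"
    by (simp add: lin_map_homogeneous[OF lin_map_vec_first] lin_map_homogeneous[OF lin_map_vec_last]
        lin_map_homogeneous[OF lin_map_m12_left] eta_of_smult distrib_left)
qed

lemma lin_map_delta1: "lin_map n2 nc delta1"
  unfolding delta1_eq_dual_map by (rule lin_map_dual_map) (rule lin_map_carrier[OF lin_map_delta4])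

lemma lin_map_sigma4: "lin_map n2 nc sigma4"
  unfolding sigma4_def[abs_def] by (rule lin_map_comp[OF lin_map_m12_right[OF e0] lin_map_mat[OF pr]])

lemma lin_map_sigma3: "lin_map (n1 + n1) n2 sigma3"
  unfolding sigma3_def[abs_def]
  by (intro lin_map_plus lin_map_comp[OF lin_map_vec_last lin_map_m11_right[OF e0]]
      lin_map_comp[OF lin_map_vec_first lin_map_scalar_prod_smult]) simp_all

lemma lin_map_sigma2: "lin_map n2 (n1 + n1) sigma2"
  unfolding sigma2_def[abs_def]
  by (intro lin_map_append lin_map_dual_map lin_map_scalar_prod_smult) simp_all

lemma lin_map_sigma1: "lin_map nc n2 sigma1"
  unfolding sigma1_def by (rule lin_map_dual_map) (rule lin_map_carrier[OF lin_map_sigma4])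

lemma delta1_delta2: "w \<in> carrier_vec (n1 + n1) \<Longrightarrow> delta1 (delta2 w) = 0\<^sub>v nc"
  unfolding delta1_eq_dual_map dual_map_def B_delta4_def
  by (intro eq_vecI) (simp_all add: scalar_prod_delta2 d2_d3_vec eta_of_mult_d3)

lemma delta2_delta3:
  assumes f: "f \<in> carrier_vec n2"
  shows "delta2 (delta3 f) = 0\<^sub>v n2"
proof (rule eq_vecI)
  fix j assume "j < dim_vec (0\<^sub>v n2 :: 'a vec)"
  then have j: "j < n2" by simp
  let ?g = "unit_vec n2 j"
  have "delta2 (delta3 f) $ j = E (m12 (d2 *\<^sub>v ?g) f) + E (m12 (d2 *\<^sub>v f) ?g)"
    using f j by (simp add: delta2_index scalar_prod_vec_first_delta3 vec_last_delta3)
  also have "\<dots> = 0"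
    using f by (simp flip: eta_of_add add: mult_d2_anticomm)
  finally show "delta2 (delta3 f) $ j = 0\<^sub>v n2 $ j" using j by simp
qed simp

lemma delta3_delta4:
  assumes c: "c \<in> carrier_vec nc"
  shows "delta3 (delta4 c) = 0\<^sub>v (n1 + n1)"
  using c unfolding B_delta3_def B_delta4_def
  by (intro eq_vecI) (auto simp: eta_of_mult_d3 d2_d3_vec)

lemma sigma3_delta3:
  "f \<in> carrier_vec n2 \<Longrightarrow> sigma3 (delta3 f) = m11 e0 (d2 *\<^sub>v f) + E (m12 e0 f) \<cdot>\<^sub>v d3_lam"
  unfolding sigma3_def by (simp add: vec_last_delta3 scalar_prod_vec_first_delta3)

lemma homotopy_at_C: "c \<in> carrier_vec nc \<Longrightarrow> sigma4 (delta4 c) = c"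
  unfolding sigma4_def B_delta4_def by (simp add: unit_mult_d3)

lemma homotopy_at_A2:
  assumes f: "f \<in> carrier_vec n2"
  shows "delta4 (sigma4 f) + sigma3 (delta3 f) = f"
proof -
  let ?y = "m12 e0 f"
  have y: "?y \<in> carrier_vec n3" using f by simp
  have "d3 *\<^sub>v ?y = d3 *\<^sub>v (iota *\<^sub>v (pr *\<^sub>v ?y) + E ?y \<cdot>\<^sub>v lam_vec)"
    by (rule arg_cong[OF decompose_A3[OF y]])
  also have "\<dots> = delta4 (sigma4 f) + E ?y \<cdot>\<^sub>v d3_lam"
    using y by (simp add: B_delta4_def sigma4_def d3_lam_def mult_add_distrib_mat_vec[OF d3]
        mult_mat_vec_smult[OF d3])
  finally have eq: "f - m11 e0 (d2 *\<^sub>v f) = delta4 (sigma4 f) + E ?y \<cdot>\<^sub>v d3_lam"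
    using f by (simp add: d3_unit_mult)
  show ?thesis
  proof (rule eq_vecI)
    fix i assume i: "i < dim_vec f"
    have "(f - m11 e0 (d2 *\<^sub>v f)) $ i = (delta4 (sigma4 f) + E ?y \<cdot>\<^sub>v d3_lam) $ i"
      using eq by simp
    then show "(delta4 (sigma4 f) + sigma3 (delta3 f)) $ i = f $ i"
      using f i by (simp add: sigma3_delta3 B_delta4_def sigma4_def algebra_simps)
  qed (use f in \<open>simp add: B_delta4_def sigma4_def sigma3_delta3\<close>)
qed

lemma homotopy_at_HomC: "chi \<in> carrier_vec nc \<Longrightarrow> delta1 (sigma1 chi) = chi"
  unfolding delta1_eq_dual_map sigma1_def
  by (simp add: dual_map_comp[OF lin_map_sigma4] lin_map_carrier[OF lin_map_delta4] dual_map_id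
      homotopy_at_C)

lemma homotopy_at_HomA2:
  assumes psi: "psi \<in> carrier_vec n2"
  shows "delta2 (sigma2 psi) + sigma1 (delta1 psi) = psi"
proof (rule eq_vecI)
  fix j assume "j < dim_vec psi"
  then have j: "j < n2" using psi by simp
  let ?g = "unit_vec n2 j"
  have g: "?g \<in> carrier_vec n2" by simp
  have "delta2 (sigma2 psi) $ j = psi \<bullet> m11 e0 (d2 *\<^sub>v ?g) + (psi \<bullet> d3_lam) * E (m12 e0 ?g)"
    using j psi
    by (simp add: delta2_index sigma2_def scalar_prod_dual_map[OF lin_map_m11_right[OF e0]]
        lin_map_homogeneous[OF lin_map_m12_left] eta_of_smult)
  also have "\<dots> = psi \<bullet> sigma3 (delta3 ?g)"
    using psi by (simp add: sigma3_delta3 scalar_prod_add_distrib[of _ n2] mult.commute)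
  finally have first: "delta2 (sigma2 psi) $ j = psi \<bullet> sigma3 (delta3 ?g)" .
  have "sigma1 (delta1 psi) $ j = delta1 psi \<bullet> sigma4 ?g"
    using j by (simp add: sigma1_def dual_map_def)
  also have "\<dots> = psi \<bullet> delta4 (sigma4 ?g)"
    unfolding delta1_eq_dual_map
    using psi lin_map_carrier[OF lin_map_sigma4 g] by (rule scalar_prod_dual_map[OF lin_map_delta4])
  finally have second: "sigma1 (delta1 psi) $ j = psi \<bullet> delta4 (sigma4 ?g)" .
  have "psi $ j = psi \<bullet> (delta4 (sigma4 ?g) + sigma3 (delta3 ?g))"
    using j by (simp add: homotopy_at_A2)
  also have "\<dots> = delta2 (sigma2 psi) $ j + sigma1 (delta1 psi) $ j"
    using psi lin_map_carrier[OF lin_map_sigma4 g] lin_map_carrier[OF lin_map_delta3 g]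
      lin_map_carrier[OF lin_map_delta4] lin_map_carrier[OF lin_map_sigma3]
    by (simp add: first second scalar_prod_add_distrib[of _ n2] add.commute)
  also have "\<dots> = (delta2 (sigma2 psi) + sigma1 (delta1 psi)) $ j"
    using j by simp
  finally show "(delta2 (sigma2 psi) + sigma1 (delta1 psi)) $ j = psi $ j" ..
qed (use psi lin_map_carrier[OF lin_map_sigma1] lin_map_carrier[OF lin_map_delta1] in simp)

lemma homotopy_at_middle:
  assumes w: "w \<in> carrier_vec (n1 + n1)"
  shows "delta3 (sigma3 w) + sigma2 (delta2 w) = w"
proof -
  define phi e where "phi = vec_first w n1" and "e = vec_last w n1"
  have phi: "phi \<in> carrier_vec n1" and e: "e \<in> carrier_vec n1" by (simp_all add: phi_def e_def)
  define f psi where "f = sigma3 w" and "psi = delta2 w"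
  have f_eq: "f = m11 e0 e + (phi \<bullet> e0) \<cdot>\<^sub>v d3_lam" by (simp add: f_def sigma3_def phi_def e_def)
  have f: "f \<in> carrier_vec n2" using f_eq e by simp
  have psi_at: "psi \<bullet> g = phi \<bullet> (d2 *\<^sub>v g) + E (m12 e g)" if "g \<in> carrier_vec n2" for g
    using that by (simp add: psi_def phi_def e_def scalar_prod_delta2)
  have "vec n1 (\<lambda>i. E (m12 (unit_vec n1 i) f)) + dual_map n1 (m11 e0) psi = phi"
  proof (rule eq_vecI)
    fix i assume "i < dim_vec phi"
    then have i: "i < n1" using phi by simp
    let ?x = "unit_vec n1 i" and ?a = "(d1 *\<^sub>v unit_vec n1 i) $ 0"
    have x: "?x \<in> carrier_vec n1" by simp
    have f_part: "E (m12 ?x f) = E (m12 ?x (m11 e0 e)) + (phi \<bullet> e0) * ?a"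
      using e by (simp add: f_eq lin_map_additive[OF lin_map_m12_right] lin_map_homogeneous[OF lin_map_m12_right]
          eta_of_add eta_of_smult mult_d3_lam)
    have psi_part: "psi \<bullet> m11 e0 ?x = phi \<bullet> ?x - ?a * (phi \<bullet> e0) + E (m12 e (m11 e0 ?x))"
      using phi e by (simp add: psi_at d2_unit_mult scalar_prod_minus_distrib[of _ n1])
    have anticomm: "E (m12 e (m11 e0 ?x)) + E (m12 ?x (m11 e0 e)) = 0"
      using e by (simp flip: eta_of_add add: mult_unit_mult_anticomm)
    have "E (m12 ?x f) + psi \<bullet> m11 e0 ?x
      = phi \<bullet> ?x + (E (m12 e (m11 e0 ?x)) + E (m12 ?x (m11 e0 e)))"
      unfolding f_part psi_part by (simp add: algebra_simps)
    then have "E (m12 ?x f) + psi \<bullet> m11 e0 ?x = phi \<bullet> ?x"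
      unfolding anticomm by simp
    then show "(vec n1 (\<lambda>i. E (m12 (unit_vec n1 i) f)) + dual_map n1 (m11 e0) psi) $ i = phi $ i"
      using i phi by (simp add: dual_map_def)
  qed (use phi in simp)
  moreover have "d2 *\<^sub>v f + (psi \<bullet> d3_lam) \<cdot>\<^sub>v e0 = e"
  proof -
    have "psi \<bullet> d3_lam = (d1 *\<^sub>v e) $ 0"
      using phi e by (simp add: psi_at mult_d3_lam eta_of_smult)
    moreover have "d2 *\<^sub>v f = e - (d1 *\<^sub>v e) $ 0 \<cdot>\<^sub>v e0"
      using e by (simp add: f_eq mult_add_distrib_mat_vec[OF d2] mult_mat_vec_smult[OF d2] d2_unit_mult)
    ultimately show ?thesis using e by (intro eq_vecI) auto
  qed
  ultimately have "delta3 f + sigma2 psi = phi @\<^sub>v e"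
    using f by (simp add: B_delta3_def sigma2_def append_vec_add[of _ n1 _ _ n1])
  then show ?thesis using w by (simp add: f_def psi_def phi_def e_def)
qed

lemma B_split_exact: "split_exact [nc, n2, n1 + n1, n2, nc] [delta1, delta2, delta3, delta4]"
proof (rule split_exact_if_contracting_homotopy[where ss = "[sigma1, sigma2, sigma3, sigma4]"])
  fix i assume "i < length [delta1, delta2, delta3, delta4]"
  then have "i < 4" by simp
  then show "lin_map ([nc, n2, n1 + n1, n2, nc] ! (i + 1)) ([nc, n2, n1 + n1, n2, nc] ! i)
      ([delta1, delta2, delta3, delta4] ! i)"
    and "lin_map ([nc, n2, n1 + n1, n2, nc] ! i) ([nc, n2, n1 + n1, n2, nc] ! (i + 1))
      ([sigma1, sigma2, sigma3, sigma4] ! i)"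
    by (auto simp: less_Suc_eq eval_nat_numeral lin_map_delta1 lin_map_delta2 lin_map_delta3
        lin_map_delta4 lin_map_sigma1 lin_map_sigma2 lin_map_sigma3 lin_map_sigma4)
next
  fix i and v :: "'a vec" assume "i + 1 < length [delta1, delta2, delta3, delta4]"
    "v \<in> carrier_vec ([nc, n2, n1 + n1, n2, nc] ! (i + 2))"
  then show "([delta1, delta2, delta3, delta4] ! i) (([delta1, delta2, delta3, delta4] ! (i + 1)) v)
      = 0\<^sub>v ([nc, n2, n1 + n1, n2, nc] ! i)"
    by (auto simp: less_Suc_eq eval_nat_numeral delta1_delta2 delta2_delta3 delta3_delta4)
next
  fix i and v :: "'a vec" assume "i < length [nc, n2, n1 + n1, n2, nc]" "v \<in> carrier_vec ([nc, n2, n1 + n1, n2, nc] ! i)"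
  then show "(if i < length [delta1, delta2, delta3, delta4]
      then ([delta1, delta2, delta3, delta4] ! i) (([sigma1, sigma2, sigma3, sigma4] ! i) v)
      else 0\<^sub>v ([nc, n2, n1 + n1, n2, nc] ! i))
    + (if i = 0 then 0\<^sub>v ([nc, n2, n1 + n1, n2, nc] ! i)
      else ([sigma1, sigma2, sigma3, sigma4] ! (i - 1)) (([delta1, delta2, delta3, delta4] ! (i - 1)) v)) = v"
    by (auto simp: less_Suc_eq eval_nat_numeral homotopy_at_HomC homotopy_at_HomA2 homotopy_at_middle
        homotopy_at_A2 homotopy_at_C)
qed simp_all

end

theorem mainTheorem3:
  fixes p q :: nat
    and d1 d2 d3 :: "'a::comm_ring_1 mat"
    and m11 m12 :: "'a vec \<Rightarrow> 'a vec \<Rightarrow> 'a vec"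
    and iota lam pr eta :: "'a mat"
  assumes noeth: "noetherian_ring TYPE('a)"
    and p: "p \<ge> 1" and q: "q \<ge> 3"
    and d1: "d1 \<in> carrier_mat 1 (p+2)"
    and d2: "d2 \<in> carrier_mat (p+2) (p+q)"
    and d3: "d3 \<in> carrier_mat (p+q) (q-1)"
    and cplx1: "d1 * d2 = 0\<^sub>m 1 (p+q)"
    and cplx2: "d2 * d3 = 0\<^sub>m (p+2) (q-1)"
    and m11: "bilin_map (p+2) (p+2) (p+q) m11"
    and m12: "bilin_map (p+2) (p+q) (q-1) m12"
    and alt1: "\<forall>e\<in>carrier_vec (p+2). m11 e e = 0\<^sub>v (p+q)"
    and alt2: "\<forall>e\<in>carrier_vec (p+2). \<forall>e'\<in>carrier_vec (p+2). m11 e e' = - m11 e' e"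
    and leib1: "\<forall>e\<in>carrier_vec (p+2). \<forall>e'\<in>carrier_vec (p+2).
       d2 *\<^sub>v m11 e e' = ((d1 *\<^sub>v e) $ 0) \<cdot>\<^sub>v e' - ((d1 *\<^sub>v e') $ 0) \<cdot>\<^sub>v e"
    and leib2: "\<forall>e\<in>carrier_vec (p+2). \<forall>f\<in>carrier_vec (p+q).
       d3 *\<^sub>v m12 e f = ((d1 *\<^sub>v e) $ 0) \<cdot>\<^sub>v f + m11 (d2 *\<^sub>v f) e"
    and iota: "iota \<in> carrier_mat (q-1) (q-2)"
    and lam: "lam \<in> carrier_mat (q-1) 1"
    and pr: "pr \<in> carrier_mat (q-2) (q-1)"
    and eta: "eta \<in> carrier_mat 1 (q-1)"
    and dec1: "pr * iota = 1\<^sub>m (q-2)"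
    and dec2: "eta * lam = 1\<^sub>m 1"
    and dec3: "pr * lam = 0\<^sub>m (q-2) 1"
    and dec4: "eta * iota = 0\<^sub>m 1 (q-2)"
    and dec5: "iota * pr + lam * eta = 1\<^sub>m (q-1)"
    and Asplit: "split_exact [1, p+2, p+q, q-1]
       [\<lambda>v. d1 *\<^sub>v v, \<lambda>v. d2 *\<^sub>v v, \<lambda>v. d3 *\<^sub>v v]"
  shows "split_exact [q-2, p+q, (p+2)+(p+2), p+q, q-2]
       [B_delta1 (q-2) d3 iota, B_delta2 (p+2) (p+q) d2 eta m12,
        B_delta3 (p+2) d2 eta m12, B_delta4 d3 iota]"
proof -
  have exact_A: "exact_seq [1, p+2, p+q, q-1] [\<lambda>v. d1 *\<^sub>v v, \<lambda>v. d2 *\<^sub>v v, \<lambda>v. d3 *\<^sub>v v]"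
    using Asplit by (simp add: split_exact_def)
  obtain e0 where e0: "e0 \<in> carrier_vec (p+2)" and "d1 *\<^sub>v e0 = unit_vec 1 0"
    using exact_seq_surjective_first[OF exact_A, of "unit_vec 1 0"] by auto
  then have d1_e0: "(d1 *\<^sub>v e0) $ 0 = 1" by simp
  have d3_injective: "x = 0\<^sub>v (q-1)" if "x \<in> carrier_vec (q-1)" "d3 *\<^sub>v x = 0\<^sub>v (p+q)" for x
    using exact_seq_injective_last[OF exact_A _ refl, of x] that by simp
  interpret B_complex "p+2" "p+q" "q-1" d1 d2 d3 m11 m12 e0 "q-2" iota lam pr eta
    by unfold_locales
      (fact d1 d2 d3 cplx1 cplx2 m11 m12 e0 d1_e0 d3_injective iota lam pr eta dec1 dec2 dec4 dec5
        | use alt2 leib1 leib2 in blast)+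
  show ?thesis by (rule B_split_exact)
qed

end
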